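(* (1) Let $M$ be a $\mathtt{dCBN}$ term. If $M^n\to N$ in $\mathtt{dBang}$, then there is a $\mathtt{dCBN}$ term $P$ such that $M\to_n^* P$ and $N\to^* P^n$. (2) Let $M$ be a $\mathtt{dCBV}$ term. If $M^v\to N$ in $\mathtt{dBang}$, then there is a $\mathtt{dCBV}$ term $P$ such that $M\to_v^* P$ and $N\to^* P^v$.
   Context: \textbf{dBang.} Terms: $M,N ::= x \mid \lambda x.M \mid MN \mid M[N/x] \mid\ !M \mid \mathrm{der}\,M$ ($M[N/x]$ explicit substitution binding $x$); $M\{N/x\}$ capture-avoiding substitution. List contexts $L ::= \square\mid L[N/x]$. Root rules: $L\langle\lambda x.M\rangle N \mapsto L\langle M[N/x]\rangle$; $M[L\langle !N\rangle/x]\mapsto L\langle M\{N/x\}\rangle$; $\mathrm{der}(L\langle !N\rangle)\mapsto L\langle N\rangle$; $\to$ is their closure under all contexts. \textbf{dCBN, dCBV.} Common syntax $M,N::=x\mid\lambda x.M\mid MN\mid M[N/x]$; values $V::=x\mid\lambda x.M$; list contexts $L::=\square\mid L[N/x]$. $\to_n$ is the closure under all contexts of $L\langle\lambda x.M\rangle N\mapsto L\langle M[N/x]\rangle$ and $M[N/x]\mapsto M\{N/x\}$. $\to_v$ is the closure under all contexts of $L\langle\lambda x.M\rangle N\mapsto L\langle M[N/x]\rangle$ and $M[L\langle V\rangle/x]\mapsto L\langle M\{V/x\}\rangle$ for $V$ a value. \textbf{Translations.} $x^n=x$, $(\lambda x.M)^n=\lambda x.M^n$, $(MN)^n=M^n\,!N^n$,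 $(M[N/x])^n=M^n[!N^n/x]$. $x^v=!x$, $(\lambda x.M)^v=!(\lambda x.M^v)$, $(MN)^v=L\langle P\rangle N^v$ if $M^v=L\langle !P\rangle$ for a list context $L$, and $(MN)^v=\mathrm{der}(M^v)\,N^v$ otherwise; $(M[N/x])^v=M^v[N^v/x]$. *)

theory Defs
  imports Main
begin

text \<open>Terms are represented with de Bruijn indices. In an explicit substitution
  M[N/x] (constructor ES M N) the variable x is index 0 in M; N lies outside
  the binder.\<close>

datatype bterm = BVar nat | BLam bterm | BApp bterm bterm | BES bterm bterm
  | BBang bterm | BDer bterm

fun bshift :: "nat \<Rightarrow> nat \<Rightarrow> bterm \<Rightarrow> bterm" where
  "bshift d c (BVar i) = BVar (if i < c then i else i + d)"
| "bshift d c (BLam M) = BLam (bshift d (Suc c) M)"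
| "bshift d c (BApp M N) = BApp (bshift d c M) (bshift d c N)"
| "bshift d c (BES M N) = BES (bshift d (Suc c) M) (bshift d c N)"
| "bshift d c (BBang M) = BBang (bshift d c M)"
| "bshift d c (BDer M) = BDer (bshift d c M)"

text \<open>bsubst k N M: capture-avoiding substitution of N (a term in the context
  outside the k binders) for index k in M, decrementing the indices above k.\<close>
fun bsubst :: "nat \<Rightarrow> bterm \<Rightarrow> bterm \<Rightarrow> bterm" where
  "bsubst k N (BVar i) = (if i < k then BVar i else if i = k then bshift k 0 N else BVar (i - 1))"
| "bsubst k N (BLam M) = BLam (bsubst (Suc k) N M)"
| "bsubst k N (BApp M P) = BApp (bsubst k N M) (bsubst k N P)"
| "bsubst k N (BES M P) = BES (bsubst (Suc k) N M) (bsubst k N P)"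
| "bsubst k N (BBang M) = BBang (bsubst k N M)"
| "bsubst k N (BDer M) = BDer (bsubst k N M)"

text \<open>List contexts L ::= \<box> | L[N/x], as the list of the substituted terms,
  outermost first: bplug (N # L) M = (L\<langle>M\<rangle>)[N/x].\<close>
fun bplug :: "bterm list \<Rightarrow> bterm \<Rightarrow> bterm" where
  "bplug [] M = M"
| "bplug (N # L) M = BES (bplug L M) N"

inductive broot :: "bterm \<Rightarrow> bterm \<Rightarrow> bool" where
  dB: "broot (BApp (bplug L (BLam M)) N) (bplug L (BES M (bshift (length L) 0 N)))"
| sbang: "broot (BES M (bplug L (BBang N))) (bplug L (bsubst 0 N (bshift (length L) 1 M)))"
| dbang: "broot (BDer (bplug L (BBang N))) (bplug L N)"

inductive bstep :: "bterm \<Rightarrow> bterm \<Rightarrow> bool" where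
  root: "broot M N \<Longrightarrow> bstep M N"
| lam: "bstep M M' \<Longrightarrow> bstep (BLam M) (BLam M')"
| appL: "bstep M M' \<Longrightarrow> bstep (BApp M N) (BApp M' N)"
| appR: "bstep N N' \<Longrightarrow> bstep (BApp M N) (BApp M N')"
| esL: "bstep M M' \<Longrightarrow> bstep (BES M N) (BES M' N)"
| esR: "bstep N N' \<Longrightarrow> bstep (BES M N) (BES M N')"
| bang: "bstep M M' \<Longrightarrow> bstep (BBang M) (BBang M')"
| der: "bstep M M' \<Longrightarrow> bstep (BDer M) (BDer M')"

datatype lterm = Var nat | Lam lterm | App lterm lterm | ES lterm lterm

fun lshift :: "nat \<Rightarrow> nat \<Rightarrow> lterm \<Rightarrow> lterm" where
  "lshift d c (Var i) = Var (if i < c then i else i + d)"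
| "lshift d c (Lam M) = Lam (lshift d (Suc c) M)"
| "lshift d c (App M N) = App (lshift d c M) (lshift d c N)"
| "lshift d c (ES M N) = ES (lshift d (Suc c) M) (lshift d c N)"

fun lsubst :: "nat \<Rightarrow> lterm \<Rightarrow> lterm \<Rightarrow> lterm" where
  "lsubst k N (Var i) = (if i < k then Var i else if i = k then lshift k 0 N else Var (i - 1))"
| "lsubst k N (Lam M) = Lam (lsubst (Suc k) N M)"
| "lsubst k N (App M P) = App (lsubst k N M) (lsubst k N P)"
| "lsubst k N (ES M P) = ES (lsubst (Suc k) N M) (lsubst k N P)"

fun lplug :: "lterm list \<Rightarrow> lterm \<Rightarrow> lterm" where
  "lplug [] M = M"
| "lplug (N # L) M = ES (lplug L M) N"

fun is_value :: "lterm \<Rightarrow> bool" where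
  "is_value (Var _) = True"
| "is_value (Lam _) = True"
| "is_value _ = False"

inductive nroot :: "lterm \<Rightarrow> lterm \<Rightarrow> bool" where
  dB: "nroot (App (lplug L (Lam M)) N) (lplug L (ES M (lshift (length L) 0 N)))"
| s: "nroot (ES M N) (lsubst 0 N M)"

inductive vroot :: "lterm \<Rightarrow> lterm \<Rightarrow> bool" where
  dB: "vroot (App (lplug L (Lam M)) N) (lplug L (ES M (lshift (length L) 0 N)))"
| sv: "is_value V \<Longrightarrow> vroot (ES M (lplug L V)) (lplug L (lsubst 0 V (lshift (length L) 1 M)))"

inductive nstep :: "lterm \<Rightarrow> lterm \<Rightarrow> bool" where
  root: "nroot M N \<Longrightarrow> nstep M N"
| lam: "nstep M M' \<Longrightarrow> nstep (Lam M) (Lam M')"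
| appL: "nstep M M' \<Longrightarrow> nstep (App M N) (App M' N)"
| appR: "nstep N N' \<Longrightarrow> nstep (App M N) (App M N')"
| esL: "nstep M M' \<Longrightarrow> nstep (ES M N) (ES M' N)"
| esR: "nstep N N' \<Longrightarrow> nstep (ES M N) (ES M N')"

inductive vstep :: "lterm \<Rightarrow> lterm \<Rightarrow> bool" where
  root: "vroot M N \<Longrightarrow> vstep M N"
| lam: "vstep M M' \<Longrightarrow> vstep (Lam M) (Lam M')"
| appL: "vstep M M' \<Longrightarrow> vstep (App M N) (App M' N)"
| appR: "vstep N N' \<Longrightarrow> vstep (App M N) (App M N')"
| esL: "vstep M M' \<Longrightarrow> vstep (ES M N) (ES M' N)"
| esR: "vstep N N' \<Longrightarrow> vstep (ES M N) (ES M N')"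

fun tn :: "lterm \<Rightarrow> bterm" where
  "tn (Var i) = BVar i"
| "tn (Lam M) = BLam (tn M)"
| "tn (App M N) = BApp (tn M) (BBang (tn N))"
| "tn (ES M N) = BES (tn M) (BBang (tn N))"

text \<open>unbang T = Some (L\<langle>P\<rangle>) iff T = L\<langle>!P\<rangle> for a list context L (the
  decomposition is unique), and None if T has no such form.\<close>
fun unbang :: "bterm \<Rightarrow> bterm option" where
  "unbang (BBang P) = Some P"
| "unbang (BES M N) = map_option (\<lambda>Q. BES Q N) (unbang M)"
| "unbang _ = None"

fun tv :: "lterm \<Rightarrow> bterm" where
  "tv (Var i) = BBang (BVar i)"
| "tv (Lam M) = BBang (BLam (tv M))"
| "tv (App M N) = (case unbang (tv M) of
      Some Q \<Rightarrow> BApp Q (tv N)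
    | None \<Rightarrow> BApp (BDer (tv M)) (tv N))"
| "tv (ES M N) = BES (tv M) (tv N)"

end

theory Submission
  imports Defs
begin

(*
  For call-by-name the bangs of M^n sit exactly on arguments and on substituted terms,
  so every dBang redex in M^n is the image of a dCBN redex and a step from M^n is the
  translation of a single dCBN step.

  For call-by-value the translation of an application M N strips the bang of
  M^v = L<!P>, giving L<P> N^v, and otherwise uses der(M^v) N^v. Steps of L<P> and of
  L<!P> correspond to each other and preserve this shape, so a step in the function part
  is simulated by the induction hypothesis for M. When M^v only acquires the form L<!P>
  after reduction, one administrative der-step brings der(M^v) N^v back to the
  translation; hence N reaches P^v in several steps instead of being equal to it.
*)

lemma bsteps_cong:
  assumes "bstep\<^sup>*\<^sup>* M M'"
  shows "bstep\<^sup>*\<^sup>* (BLam M) (BLam M')" and "bstep\<^sup>*\<^sup>* (BApp M N) (BApp M' N)"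
    and "bstep\<^sup>*\<^sup>* (BApp N M) (BApp N M')" and "bstep\<^sup>*\<^sup>* (BES M N) (BES M' N)"
    and "bstep\<^sup>*\<^sup>* (BES N M) (BES N M')" and "bstep\<^sup>*\<^sup>* (BBang M) (BBang M')"
    and "bstep\<^sup>*\<^sup>* (BDer M) (BDer M')"
  using assms by (induction rule: rtranclp_induct;
      auto intro: rtranclp.rtrancl_into_rtrancl bstep.intros)+

lemma vsteps_cong:
  assumes "vstep\<^sup>*\<^sup>* M M'"
  shows "vstep\<^sup>*\<^sup>* (Lam M) (Lam M')" and "vstep\<^sup>*\<^sup>* (App M N) (App M' N)"
    and "vstep\<^sup>*\<^sup>* (App N M) (App N M')" and "vstep\<^sup>*\<^sup>* (ES M N) (ES M' N)"
    and "vstep\<^sup>*\<^sup>* (ES N M) (ES N M')"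
  using assms by (induction rule: rtranclp_induct;
      auto intro: rtranclp.rtrancl_into_rtrancl vstep.intros)+

inductive_cases brootE_Var[elim!]: "broot (BVar i) X"
inductive_cases brootE_Lam[elim!]: "broot (BLam M) X"
inductive_cases brootE_Bang[elim!]: "broot (BBang M) X"
inductive_cases bstepE_Var[elim!]: "bstep (BVar i) X"
inductive_cases bstepE_Lam: "bstep (BLam M) X"
inductive_cases bstepE_Bang: "bstep (BBang M) X"
inductive_cases bstepE_App[consumes 1, case_names root appL appR]: "bstep (BApp M N) X"
inductive_cases bstepE_ES[consumes 1, case_names root esL esR]: "bstep (BES M N) X"
inductive_cases bstepE_Der[consumes 1, case_names root der]: "bstep (BDer M) X"

lemma bshift_0[simp]: "bshift 0 c M = M"
  by (induction M arbitrary: c) auto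

section \<open>Call-by-name\<close>

lemma tn_lshift: "tn (lshift d c M) = bshift d c (tn M)"
  by (induction M arbitrary: c) auto

lemma tn_lsubst: "tn (lsubst k N M) = bsubst k (tn N) (tn M)"
  by (induction M arbitrary: k) (auto simp: tn_lshift)

lemma tn_lplug: "tn (lplug L M) = bplug (map (\<lambda>N. BBang (tn N)) L) (tn M)"
  by (induction L) auto

lemma tn_eq_bplug_BLam:
  "tn M = bplug L (BLam X) \<Longrightarrow>
    \<exists>L' M'. M = lplug L' (Lam M') \<and> L = map (\<lambda>N. BBang (tn N)) L' \<and> X = tn M'"
proof (induction L arbitrary: M)
  case Nil
  then show ?case by (cases M) (auto intro!: exI[of _ "[]"])
next
  case (Cons N L)
  then obtain A B where M: "M = ES A B" "N = BBang (tn B)" and A: "tn A = bplug L (BLam X)"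
    by (cases M) auto
  from Cons.IH[OF A] obtain L' M'
    where "A = lplug L' (Lam M')" "L = map (\<lambda>N. BBang (tn N)) L'" "X = tn M'"
    by blast
  with M show ?case by (intro exI[of _ "B # L'"] exI[of _ M']) auto
qed

lemma broot_tn:
  assumes "broot (tn M) X"
  shows "\<exists>P. nroot M P \<and> X = tn P"
  using assms
proof cases
  case (dB L M0 N)
  then obtain M1 M2 where M: "M = App M1 M2" "tn M1 = bplug L (BLam M0)" "N = BBang (tn M2)"
    by (cases M) auto
  then obtain L' M' where "M1 = lplug L' (Lam M')" "L = map (\<lambda>N. BBang (tn N)) L'" "M0 = tn M'"
    using tn_eq_bplug_BLam by blast
  with dB M show ?thesis
    by (intro exI[of _ "lplug L' (ES M' (lshift (length L') 0 M2))"])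
      (auto intro: nroot.dB simp: tn_lplug tn_lshift)
next
  case (sbang M0 L N)
  then obtain A B where "M = ES A B" "M0 = tn A" "N = tn B" "L = []"
    by (cases M; cases L) auto
  with sbang show ?thesis by (auto intro: nroot.s simp: tn_lsubst)
next
  case dbang
  then show ?thesis by (cases M) auto
qed

lemma bstep_tn_imp_nstep: "bstep (tn M) X \<Longrightarrow> \<exists>P. nstep M P \<and> X = tn P"
proof (induction M arbitrary: X)
  case (Lam M)
  then show ?case by (auto elim!: bstepE_Lam dest!: Lam.IH intro: nstep.lam)
next
  case (App M1 M2)
  from App.prems[unfolded tn.simps] show ?case
  proof (cases rule: bstepE_App)
    case root
    with broot_tn[of "App M1 M2"] show ?thesis by (auto intro: nstep.root)
  next
    case (appL M')
    then show ?thesis by (auto dest!: App.IH intro: nstep.appL)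
  next
    case (appR N')
    then show ?thesis by (auto elim!: bstepE_Bang dest!: App.IH intro: nstep.appR)
  qed
next
  case (ES A B)
  from ES.prems[unfolded tn.simps] show ?case
  proof (cases rule: bstepE_ES)
    case root
    with broot_tn[of "ES A B"] show ?thesis by (auto intro: nstep.root)
  next
    case (esL M')
    then show ?thesis by (auto dest!: ES.IH intro: nstep.esL)
  next
    case (esR N')
    then show ?thesis by (auto elim!: bstepE_Bang dest!: ES.IH intro: nstep.esR)
  qed
qed auto

section \<open>Call-by-value\<close>

lemma unbang_bplug: "unbang (bplug L M) = map_option (bplug L) (unbang M)"
  by (induction L) (auto simp: option.map_comp o_def option.map_ident)

lemma unbang_SomeD: "unbang M = Some Q \<Longrightarrow> \<exists>L P. M = bplug L (BBang P) \<and> Q = bplug L P"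
proof (induction M arbitrary: Q)
  case (BES M N)
  then obtain Q0 where "unbang M = Some Q0" "Q = BES Q0 N" by auto
  with BES.IH(1) obtain L P where "M = bplug L (BBang P)" "Q0 = bplug L P" by blast
  with \<open>Q = BES Q0 N\<close> show ?case by (intro exI[of _ "N # L"] exI[of _ P]) auto
qed (auto intro: exI[of _ "[]"])

lemma unbang_bshift: "unbang (bshift d c M) = map_option (bshift d c) (unbang M)"
  by (induction M arbitrary: c) (auto simp: option.map_comp o_def)

lemma unbang_bsubst: "unbang M = Some Q \<Longrightarrow> unbang (bsubst k N M) = Some (bsubst k N Q)"
  by (induction M arbitrary: k Q) auto

lemma bstep_BDer_unbang: "unbang M = Some Q \<Longrightarrow> bstep (BDer M) Q"
  by (auto dest!: unbang_SomeD intro: bstep.root broot.dbang)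

lemma bstep_unbang_lift:
  "unbang M = Some Q \<Longrightarrow> bstep Q Q' \<Longrightarrow> \<exists>M'. bstep M M' \<and> unbang M' = Some Q'"
proof (induction M arbitrary: Q Q')
  case (BBang P)
  then show ?case by (auto intro: bstep.bang)
next
  case (BES M N)
  then obtain Q0 where Q0: "unbang M = Some Q0" "Q = BES Q0 N" by auto
  from BES.prems(2)[unfolded Q0(2)] show ?case
  proof (cases rule: bstepE_ES)
    case root
    then obtain L P where "N = bplug L (BBang P)"
        "Q' = bplug L (bsubst 0 P (bshift (length L) 1 Q0))"
      by (auto elim: broot.cases)
    moreover have "bstep (BES M N) (bplug L (bsubst 0 P (bshift (length L) 1 M)))"
      unfolding \<open>N = _\<close> by (intro bstep.root broot.sbang)
    ultimately show ?thesis
      using Q0(1) by (auto simp: unbang_bplug unbang_bshift unbang_bsubst)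
  next
    case (esL Q0')
    with BES.IH(1)[OF Q0(1)] obtain M' where "bstep M M'" "unbang M' = Some Q0'" by blast
    with esL show ?thesis by (auto intro: bstep.esL)
  next
    case (esR N')
    with Q0 show ?thesis by (auto intro: bstep.esR)
  qed
qed auto

lemma bstep_unbang_project:
  "unbang M = Some Q \<Longrightarrow> bstep M M' \<Longrightarrow> \<exists>Q'. bstep Q Q' \<and> unbang M' = Some Q'"
proof (induction M arbitrary: Q M')
  case (BBang P)
  then show ?case by (auto elim!: bstepE_Bang intro: bstep.bang)
next
  case (BES M N)
  then obtain Q0 where Q0: "unbang M = Some Q0" "Q = BES Q0 N" by auto
  from BES.prems(2) show ?case
  proof (cases rule: bstepE_ES)
    case root
    then obtain L P where "N = bplug L (BBang P)"
        "M' = bplug L (bsubst 0 P (bshift (length L) 1 M))"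
      by (auto elim: broot.cases)
    moreover have "bstep Q (bplug L (bsubst 0 P (bshift (length L) 1 Q0)))"
      unfolding Q0(2) \<open>N = _\<close> by (intro bstep.root broot.sbang)
    ultimately show ?thesis
      using Q0(1) by (auto simp: unbang_bplug unbang_bshift unbang_bsubst)
  next
    case (esL M0')
    with BES.IH(1)[OF Q0(1)] obtain Q0' where "bstep Q0 Q0'" "unbang M0' = Some Q0'" by blast
    with esL Q0 show ?thesis by (auto intro: bstep.esL)
  next
    case (esR N')
    with Q0 show ?thesis by (auto intro: bstep.esR)
  qed
qed auto

lemma bsteps_unbang_project:
  "bstep\<^sup>*\<^sup>* M M' \<Longrightarrow> unbang M = Some Q \<Longrightarrow> \<exists>Q'. bstep\<^sup>*\<^sup>* Q Q' \<and> unbang M' = Some Q'"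
proof (induction rule: rtranclp_induct)
  case (step M' M'')
  then obtain Q' where "bstep\<^sup>*\<^sup>* Q Q'" "unbang M' = Some Q'" by blast
  with bstep_unbang_project[OF _ step(2)] show ?case by (meson rtranclp.rtrancl_into_rtrancl)
qed auto

definition tv_head :: "lterm \<Rightarrow> bterm" where
  "tv_head M = (case unbang (tv M) of Some Q \<Rightarrow> Q | None \<Rightarrow> BDer (tv M))"

lemma tv_App[simp]: "tv (App M N) = BApp (tv_head M) (tv N)"
  by (simp add: tv_head_def split: option.split)

declare tv.simps(3)[simp del]

lemma tv_lshift: "tv (lshift d c M) = bshift d c (tv M)"
  by (induction M arbitrary: c) (auto simp: tv_head_def unbang_bshift split: option.splits)

lemma unbang_tv_bsubst: "unbang (bsubst k N (tv M)) = map_option (bsubst k N) (unbang (tv M))"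
  by (induction M arbitrary: k) (auto simp: option.map_comp o_def)

lemma tv_lsubst: "tv V = BBang N \<Longrightarrow> tv (lsubst k V M) = bsubst k N (tv M)"
  by (induction M arbitrary: k)
    (auto simp: tv_lshift tv_head_def unbang_tv_bsubst split: option.splits)

lemma tv_lplug: "tv (lplug L M) = bplug (map tv L) (tv M)"
  by (induction L) auto

lemma tv_eq_bplug_BBang:
  "tv M = bplug L (BBang P) \<Longrightarrow>
    \<exists>L' V. M = lplug L' V \<and> is_value V \<and> L = map tv L' \<and> tv V = BBang P"
proof (induction L arbitrary: M)
  case Nil
  then show ?case by (cases M) (auto intro!: exI[of _ "[]"])
next
  case (Cons N L)
  then obtain A B where M: "M = ES A B" "N = tv B" and A: "tv A = bplug L (BBang P)"
    by (cases M) auto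
  from Cons.IH[OF A] obtain L' V
    where "A = lplug L' V" "is_value V" "L = map tv L'" "tv V = BBang P"
    by blast
  with M show ?case by (intro exI[of _ "B # L'"] exI[of _ V]) auto
qed

lemma tv_head_eq_bplug_BLam:
  "tv_head M = bplug L (BLam X) \<Longrightarrow> \<exists>L' M'. M = lplug L' (Lam M') \<and> L = map tv L' \<and> X = tv M'"
proof (induction L arbitrary: M)
  case Nil
  then show ?case
    by (cases M) (auto intro!: exI[of _ "[]"] simp: tv_head_def split: option.splits)
next
  case (Cons N L)
  then obtain A B where M: "M = ES A B" "N = tv B" and A: "tv_head A = bplug L (BLam X)"
    by (cases M) (auto simp: tv_head_def split: option.splits)
  from Cons.IH[OF A] obtain L' M' where "A = lplug L' (Lam M')" "L = map tv L'" "X = tv M'"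
    by blast
  with M show ?case by (intro exI[of _ "B # L'"] exI[of _ M']) auto
qed

lemma broot_tv:
  assumes "broot (tv M) X"
  shows "\<exists>P. vroot M P \<and> X = tv P"
  using assms
proof cases
  case (dB L M0 N)
  then obtain M1 M2 where M: "M = App M1 M2" "tv_head M1 = bplug L (BLam M0)" "N = tv M2"
    by (cases M) (auto split: option.splits)
  then obtain L' M' where "M1 = lplug L' (Lam M')" "L = map tv L'" "M0 = tv M'"
    using tv_head_eq_bplug_BLam by blast
  with dB M show ?thesis
    by (intro exI[of _ "lplug L' (ES M' (lshift (length L') 0 M2))"])
      (auto intro: vroot.dB simp: tv_lplug tv_lshift)
next
  case (sbang M0 L N)
  then obtain A B where M: "M = ES A B" "M0 = tv A" and B: "tv B = bplug L (BBang N)"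
    by (cases M) (auto split: option.splits)
  from tv_eq_bplug_BBang[OF B] obtain L' V
    where V: "B = lplug L' V" "is_value V" "L = map tv L'" "tv V = BBang N"
    by blast
  have "vroot M (lplug L' (lsubst 0 V (lshift (length L') 1 A)))"
    unfolding M(1) V(1) using V(2) by (rule vroot.sv)
  moreover have "X = tv (lplug L' (lsubst 0 V (lshift (length L') 1 A)))"
    using sbang M V by (simp add: tv_lplug tv_lsubst tv_lshift)
  ultimately show ?thesis by blast
next
  case dbang
  then show ?thesis by (cases M) auto
qed

lemma bsteps_BDer_tv: "bstep\<^sup>*\<^sup>* (BDer (tv M)) (tv_head M)"
  by (auto simp: tv_head_def intro: bstep_BDer_unbang split: option.split)

lemma bstep_tv_head:
  assumes sim: "\<And>X. bstep (tv M) X \<Longrightarrow> \<exists>P. vstep\<^sup>*\<^sup>* M P \<and> bstep\<^sup>*\<^sup>* X (tv P)"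
    and step: "bstep (tv_head M) Y"
  shows "\<exists>P. vstep\<^sup>*\<^sup>* M P \<and> bstep\<^sup>*\<^sup>* Y (tv_head P)"
proof (cases "unbang (tv M)")
  case None
  with step have "bstep (BDer (tv M)) Y" by (simp add: tv_head_def)
  then show ?thesis
  proof (cases rule: bstepE_Der)
    case root
    with None show ?thesis by (auto elim: broot.cases simp: unbang_bplug)
  next
    case (der Y')
    with sim obtain P where "vstep\<^sup>*\<^sup>* M P" "bstep\<^sup>*\<^sup>* Y' (tv P)" by blast
    with der show ?thesis
      by (meson bsteps_cong(7) bsteps_BDer_tv rtranclp_trans)
  qed
next
  case (Some Q)
  with step have "bstep Q Y" by (simp add: tv_head_def)
  with Some obtain T where "bstep (tv M) T" "unbang T = Some Y"
    using bstep_unbang_lift by blast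
  with sim obtain P where "vstep\<^sup>*\<^sup>* M P" "bstep\<^sup>*\<^sup>* T (tv P)" by blast
  with \<open>unbang T = Some Y\<close> obtain Y' where "bstep\<^sup>*\<^sup>* Y Y'" "unbang (tv P) = Some Y'"
    using bsteps_unbang_project by blast
  with \<open>vstep\<^sup>*\<^sup>* M P\<close> show ?thesis by (auto simp: tv_head_def)
qed

lemma bstep_tv_imp_vsteps: "bstep (tv M) X \<Longrightarrow> \<exists>P. vstep\<^sup>*\<^sup>* M P \<and> bstep\<^sup>*\<^sup>* X (tv P)"
proof (induction M arbitrary: X)
  case (Lam M)
  then obtain Y where "X = BBang (BLam Y)" "bstep (tv M) Y"
    by (auto elim!: bstepE_Bang bstepE_Lam)
  moreover from this Lam.IH obtain P where "vstep\<^sup>*\<^sup>* M P" "bstep\<^sup>*\<^sup>* Y (tv P)" by blast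
  ultimately show ?case by (metis bsteps_cong(1,6) vsteps_cong(1) tv.simps(2))
next
  case (App M1 M2)
  from App.prems[unfolded tv_App] show ?case
  proof (cases rule: bstepE_App)
    case root
    with broot_tv[of "App M1 M2"] obtain P where "vroot (App M1 M2) P" "X = tv P" by auto
    then show ?thesis by (auto intro: vstep.root)
  next
    case (appL Y)
    with bstep_tv_head[OF App.IH(1)] obtain P where "vstep\<^sup>*\<^sup>* M1 P" "bstep\<^sup>*\<^sup>* Y (tv_head P)"
      by blast
    with appL show ?thesis
      by (intro exI[of _ "App P M2"]) (auto intro: vsteps_cong(2) bsteps_cong(2))
  next
    case (appR N')
    with App.IH(2) obtain P where "vstep\<^sup>*\<^sup>* M2 P" "bstep\<^sup>*\<^sup>* N' (tv P)" by blast
    with appR show ?thesis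
      by (intro exI[of _ "App M1 P"]) (auto intro: vsteps_cong(3) bsteps_cong(3))
  qed
next
  case (ES A B)
  from ES.prems[unfolded tv.simps] show ?case
  proof (cases rule: bstepE_ES)
    case root
    with broot_tv[of "ES A B"] obtain P where "vroot (ES A B) P" "X = tv P" by auto
    then show ?thesis by (auto intro: vstep.root)
  next
    case (esL A')
    with ES.IH(1) obtain P where "vstep\<^sup>*\<^sup>* A P" "bstep\<^sup>*\<^sup>* A' (tv P)" by blast
    with esL show ?thesis
      by (intro exI[of _ "ES P B"]) (auto intro: vsteps_cong(4) bsteps_cong(4))
  next
    case (esR B')
    with ES.IH(2) obtain P where "vstep\<^sup>*\<^sup>* B P" "bstep\<^sup>*\<^sup>* B' (tv P)" by blast
    with esR show ?thesis
      by (intro exI[of _ "ES A P"]) (auto intro: vsteps_cong(5) bsteps_cong(5))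
  qed
qed (auto elim!: bstepE_Bang)

theorem mainTheorem7:
  shows "(\<forall>M N. bstep (tn M) N \<longrightarrow>
            (\<exists>P. nstep\<^sup>*\<^sup>* M P \<and> bstep\<^sup>*\<^sup>* N (tn P)))
       \<and> (\<forall>M N. bstep (tv M) N \<longrightarrow>
            (\<exists>P. vstep\<^sup>*\<^sup>* M P \<and> bstep\<^sup>*\<^sup>* N (tv P)))"
  using bstep_tn_imp_nstep bstep_tv_imp_vsteps by blast

end
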